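(* Let $N\ge3$ and let ${\bf k}=(k_0,\dots,k_{r-1})$ with every $k_m\ge1$ and $\sum_m k_m=N$. For $0\le m\le r-1$ let ${\bf k}^{(m)}$ be obtained from ${\bf k}$ by replacing $k_m$ by $k_m-1$. Then $$\Delta_{N,{\bf k}}\ \ge\ \frac{N(N-2)}{(N-1)^2}\,\min\{\Delta_{N-1,{\bf k}^{(m)}}:\ 0\le m\le r-1\}.$$
   Context: Fix $r\ge2$, distinct reals $e_0,\dots,e_{r-1}$. For $M\ge2$ and ${\bf j}=(j_0,\dots,j_{r-1})$ nonnegative integers with $\sum_m j_m=M$, the multislice $\mathcal{V}_{M,{\bf j}}$ is the set of $x\in\{e_0,\dots,e_{r-1}\}^M$ with exactly $j_m$ coordinates equal to $e_m$ for each $m$; $\mu_{M,{\bf j}}$ is the uniform probability measure on it. For $i<j$, $\pi_{i,j}x$ swaps coordinates $i$ and $j$ of $x$. The Dirichlet form is $$\mathcal{D}_{M,{\bf j}}(f,f)=\frac{1}{M-1}\sum_{x\in\mathcal{V}_{M,{\bf j}}}\sum_{1\le i<j\le M}(f(\pi_{i,j}x)-f(x))^2\,\mu_{M,{\bf j}}(x),$$ and $\Delta_{M,{\bf j}}=\inf\{\mathcal{D}_{M,{\bf j}}(f,f):\ \|f\|_{L^2(\mu_{M,{\bf j}})}=1,\ \langle f,1\rangle_{L^2(\mu_{M,{\bf j}})}=0\}$, with the convention that the infimum over an empty set (when $\mathcal{V}_{M,{\bf j}}$ is a single point) is $+\infty$. *)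

theory Defs
  imports "HOL-Analysis.Analysis"
begin

definition multislice :: "(nat \<Rightarrow> real) \<Rightarrow> nat \<Rightarrow> nat \<Rightarrow> (nat \<Rightarrow> nat) \<Rightarrow> (nat \<Rightarrow> real) set" where
  "multislice e r M j =
     {x \<in> PiE {1..M} (\<lambda>_. e ` {..<r}). \<forall>m<r. card {i \<in> {1..M}. x i = e m} = j m}"

definition swap_coords :: "nat \<Rightarrow> nat \<Rightarrow> (nat \<Rightarrow> real) \<Rightarrow> (nat \<Rightarrow> real)" where
  "swap_coords i j x = x(i := x j, j := x i)"

definition mu :: "(nat \<Rightarrow> real) \<Rightarrow> nat \<Rightarrow> nat \<Rightarrow> (nat \<Rightarrow> nat) \<Rightarrow> (nat \<Rightarrow> real) \<Rightarrow> real" where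
  "mu e r M j x = (if x \<in> multislice e r M j then 1 / real (card (multislice e r M j)) else 0)"

definition L2_inner :: "(nat \<Rightarrow> real) \<Rightarrow> nat \<Rightarrow> nat \<Rightarrow> (nat \<Rightarrow> nat)
    \<Rightarrow> ((nat \<Rightarrow> real) \<Rightarrow> real) \<Rightarrow> ((nat \<Rightarrow> real) \<Rightarrow> real) \<Rightarrow> real" where
  "L2_inner e r M j f g = (\<Sum>x\<in>multislice e r M j. f x * g x * mu e r M j x)"

definition L2_norm_ms :: "(nat \<Rightarrow> real) \<Rightarrow> nat \<Rightarrow> nat \<Rightarrow> (nat \<Rightarrow> nat)
    \<Rightarrow> ((nat \<Rightarrow> real) \<Rightarrow> real) \<Rightarrow> real" where
  "L2_norm_ms e r M j f = sqrt (L2_inner e r M j f f)"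

definition dirichlet :: "(nat \<Rightarrow> real) \<Rightarrow> nat \<Rightarrow> nat \<Rightarrow> (nat \<Rightarrow> nat)
    \<Rightarrow> ((nat \<Rightarrow> real) \<Rightarrow> real) \<Rightarrow> real" where
  "dirichlet e r M j f =
     1 / (real M - 1) *
     (\<Sum>x\<in>multislice e r M j. \<Sum>(i, k)\<in>{(i, k). 1 \<le> i \<and> i < k \<and> k \<le> M}.
        (f (swap_coords i k x) - f x)\<^sup>2 * mu e r M j x)"

text \<open>Spectral gap, valued in the extended reals so that the infimum over the
  empty set is \<open>+\<infinity>\<close>.\<close>
definition gap :: "(nat \<Rightarrow> real) \<Rightarrow> nat \<Rightarrow> nat \<Rightarrow> (nat \<Rightarrow> nat) \<Rightarrow> ereal" where
  "gap e r M j = Inf (ereal ` {dirichlet e r M j f | f.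
      L2_norm_ms e r M j f = 1 \<and> L2_inner e r M j f (\<lambda>_. 1) = 0})"

end

theory Submission
  imports Defs
begin

text \<open>Let \<open>f\<close> have mean zero on the \<open>N\<close>-slice and let \<open>\<lambda>\<close> lie below the gaps of all the
  \<open>(N-1)\<close>-slices \<open>\<V>\<^bsub>N-1,k\<^sup>(\<^sup>m\<^sup>)\<^esub>\<close>. For a coordinate \<open>l\<close>, the function
  \<open>f \<circ> \<pi>\<^bsub>l,N\<^esub>\<close> restricted to a fibre \<open>{x\<^sub>N = e\<^sub>m}\<close> lives on such a slice, so \<open>\<lambda>\<close> times its
  variance there is bounded by its Dirichlet energy. Summing over the fibres and over \<open>l\<close>
  counts every pair of coordinates \<open>N - 2\<close> times and gives
  \<open>\<lambda> (N \<parallel>f\<parallel>\<^sup>2 - \<Sum>\<^sub>l \<parallel>E[f | x\<^sub>l]\<parallel>\<^sup>2) \<le> (N - 1) \<D>(f)\<close>.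

  Distinct coordinates of a uniform point of the slice are negatively correlated, which makes
  \<open>h = \<Sum>\<^sub>l E[f | x\<^sub>l]\<close> satisfy \<open>\<parallel>h\<parallel>\<^sup>2 \<le> N/(N-1) \<Sum>\<^sub>l \<parallel>E[f | x\<^sub>l]\<parallel>\<^sup>2 = N/(N-1) \<langle>f, h\<rangle>\<close>.
  Cauchy--Schwarz then yields \<open>\<Sum>\<^sub>l \<parallel>E[f | x\<^sub>l]\<parallel>\<^sup>2 \<le> N/(N-1) \<parallel>f\<parallel>\<^sup>2\<close>, hence
  \<open>\<lambda> N(N-2)/(N-1) \<parallel>f\<parallel>\<^sup>2 \<le> (N - 1) \<D>(f)\<close>.\<close>

lemma swap_coords_eq_comp: "swap_coords i j x = x \<circ> Transposition.transpose i j"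
  by (auto simp: swap_coords_def Transposition.transpose_def fun_eq_iff)

lemma swap_coords_involutory [simp]: "swap_coords i j (swap_coords i j x) = x"
  by (simp add: swap_coords_eq_comp fun_eq_iff)

lemma swap_coords_commute: "swap_coords i j = swap_coords j i"
  by (auto simp: swap_coords_def fun_eq_iff)

lemma swap_coords_conj:
  "swap_coords a b (swap_coords i j (swap_coords a b x)) =
     swap_coords (Transposition.transpose a b i) (Transposition.transpose a b j) x"
  by (auto simp: swap_coords_eq_comp Transposition.transpose_def fun_eq_iff)

lemma swap_coords_apply_first [simp]: "swap_coords i j x i = x j"
  by (simp add: swap_coords_def)

lemma swap_coords_apply_second [simp]: "swap_coords i j x j = x i"
  by (simp add: swap_coords_def)

lemma swap_coords_apply_other [simp]: "p \<noteq> i \<Longrightarrow> p \<noteq> j \<Longrightarrow> swap_coords i j x p = x p"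
  by (simp add: swap_coords_def)

lemma swap_coords_fun_upd:
  "i \<noteq> p \<Longrightarrow> j \<noteq> p \<Longrightarrow> swap_coords i j (y(p := v)) = (swap_coords i j y)(p := v)"
  by (auto simp: swap_coords_def fun_eq_iff)

lemma finite_multislice: "finite (multislice e r M j)"
proof -
  have "finite (PiE {1..M} (\<lambda>_. e ` {..<r}))" by (intro finite_PiE) auto
  then show ?thesis unfolding multislice_def by (rule finite_subset[rotated]) auto
qed

lemma card_level_swap_coords:
  assumes "i \<in> {1..M}" "l \<in> {1..M}"
  shows "card {p \<in> {1..M}. swap_coords i l x p = v} = card {p \<in> {1..M}. x p = v}"
  by (rule bij_betw_same_card[where f="Transposition.transpose i l"],
      rule bij_betw_byWitness[where f'="Transposition.transpose i l"])
     (use assms in \<open>auto simp: swap_coords_eq_comp Transposition.transpose_def\<close>)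

lemma swap_coords_in_multislice:
  assumes "x \<in> multislice e r M j" "i \<in> {1..M}" "l \<in> {1..M}"
  shows "swap_coords i l x \<in> multislice e r M j"
proof -
  have x: "x \<in> PiE {1..M} (\<lambda>_. e ` {..<r})" "\<forall>m<r. card {p \<in> {1..M}. x p = e m} = j m"
    using assms(1) unfolding multislice_def by auto
  have "swap_coords i l x \<in> PiE {1..M} (\<lambda>_. e ` {..<r})"
    using x(1) assms(2,3) unfolding PiE_iff extensional_def swap_coords_def by auto
  then show ?thesis
    using x(2) card_level_swap_coords[OF assms(2,3)] unfolding multislice_def by simp
qed

lemma bij_betw_swap_coords_multislice:
  assumes "i \<in> {1..M}" "l \<in> {1..M}"
  shows "bij_betw (swap_coords i l) (multislice e r M j) (multislice e r M j)"
  by (rule bij_betw_byWitness[where f'="swap_coords i l"])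
     (use assms swap_coords_in_multislice in auto)

lemma sum_multislice_swap_coords:
  assumes "i \<in> {1..M}" "l \<in> {1..M}"
  shows "(\<Sum>x\<in>multislice e r M j. F (swap_coords i l x)) = (\<Sum>x\<in>multislice e r M j. F x)"
  using sum.reindex_bij_betw[OF bij_betw_swap_coords_multislice[OF assms]] by simp

section \<open>The spectral gap as a variance inequality\<close>

abbreviation coord_pairs :: "nat \<Rightarrow> (nat \<times> nat) set" where
  "coord_pairs M \<equiv> {(i, k). 1 \<le> i \<and> i < k \<and> k \<le> M}"

lemma finite_coord_pairs: "finite (coord_pairs M)"
  by (rule finite_subset[of _ "{1..M} \<times> {1..M}"]) auto

definition swap_energy ::
    "(nat \<Rightarrow> real) \<Rightarrow> nat \<Rightarrow> nat \<Rightarrow> (nat \<Rightarrow> nat) \<Rightarrow> ((nat \<Rightarrow> real) \<Rightarrow> real) \<Rightarrow> real" where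
  "swap_energy e r M j f =
     (\<Sum>x\<in>multislice e r M j. \<Sum>(i, k)\<in>coord_pairs M. (f (swap_coords i k x) - f x)\<^sup>2)"

lemma dirichlet_eq_swap_energy:
  "dirichlet e r M j f = swap_energy e r M j f / ((real M - 1) * card (multislice e r M j))"
  unfolding dirichlet_def swap_energy_def mu_def
  by (simp add: sum_divide_distrib sum_distrib_right case_prod_unfold ac_simps)

lemma swap_energy_nonneg: "swap_energy e r M j f \<ge> 0"
  unfolding swap_energy_def by (intro sum_nonneg) (auto simp: case_prod_unfold)

lemma dirichlet_nonneg: "M \<ge> 1 \<Longrightarrow> dirichlet e r M j f \<ge> 0"
  unfolding dirichlet_eq_swap_energy using swap_energy_nonneg[of e r M j f]
  by (intro divide_nonneg_nonneg) auto

lemma gap_nonneg: "M \<ge> 1 \<Longrightarrow> gap e r M j \<ge> 0"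
  unfolding gap_def by (rule Inf_greatest) (use dirichlet_nonneg in auto)

lemma L2_inner_eq_sum:
  "L2_inner e r M j f g = (\<Sum>x\<in>multislice e r M j. f x * g x) / card (multislice e r M j)"
  unfolding L2_inner_def mu_def by (simp add: sum_divide_distrib)

lemma gap_le_dirichlet_div_variance:
  fixes e :: "nat \<Rightarrow> real" and r M :: nat and j :: "nat \<Rightarrow> nat"
    and g :: "(nat \<Rightarrow> real) \<Rightarrow> real"
  defines "Var \<equiv> L2_inner e r M j g g - (L2_inner e r M j g (\<lambda>_. 1))\<^sup>2"
  assumes Var: "Var > 0"
  shows "gap e r M j \<le> ereal (dirichlet e r M j g / Var)"
proof -
  define V where "V = multislice e r M j"
  define n where "n = real (card V)"
  define c where "c = (\<Sum>x\<in>V. g x) / n"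
  define f where "f = (\<lambda>x. (g x - c) / sqrt Var)"
  have "V \<noteq> {}"
    using Var unfolding Var_def L2_inner_eq_sum V_def[symmetric] by auto
  then have n: "n > 0" unfolding n_def V_def by (simp add: card_gt_0_iff finite_multislice)
  have Var_eq: "Var = (\<Sum>x\<in>V. (g x)\<^sup>2) / n - c\<^sup>2"
    unfolding Var_def L2_inner_eq_sum V_def[symmetric] n_def[symmetric] c_def
    by (simp add: power2_eq_square)
  have "(\<Sum>x\<in>V. (g x - c)\<^sup>2) = (\<Sum>x\<in>V. (g x)\<^sup>2) - 2 * c * (\<Sum>x\<in>V. g x) + n * c\<^sup>2"
    unfolding n_def
    by (simp add: power2_diff sum.distrib sum_subtractf sum_distrib_left sum_distrib_right
        algebra_simps)
  also have "\<dots> = n * Var"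
    using n unfolding Var_eq c_def by (simp add: field_simps power2_eq_square)
  finally have "L2_inner e r M j f f = 1"
    using n Var unfolding L2_inner_eq_sum V_def[symmetric] n_def[symmetric] f_def
    by (simp add: sum_divide_distrib[symmetric] power2_eq_square)
  then have norm: "L2_norm_ms e r M j f = 1" unfolding L2_norm_ms_def by simp
  have mean: "L2_inner e r M j f (\<lambda>_. 1) = 0"
    using n unfolding L2_inner_eq_sum V_def[symmetric] n_def[symmetric] f_def c_def
    by (simp add: sum_divide_distrib[symmetric] sum_subtractf n_def)
  have "swap_energy e r M j f = swap_energy e r M j g / Var"
    using Var unfolding swap_energy_def f_def
    by (simp add: sum_divide_distrib case_prod_unfold power_divide diff_divide_distrib[symmetric])
  then have "dirichlet e r M j f = dirichlet e r M j g / Var"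
    unfolding dirichlet_eq_swap_energy by simp
  moreover have "gap e r M j \<le> ereal (dirichlet e r M j f)"
    unfolding gap_def using norm mean by (intro Inf_lower) blast
  ultimately show ?thesis by simp
qed

lemma gap_mult_variance_le_swap_energy:
  assumes "M \<ge> 1" "lam \<ge> 0" "ereal lam \<le> gap e r M j"
  shows "lam * ((\<Sum>x\<in>multislice e r M j. (g x)\<^sup>2)
                - (\<Sum>x\<in>multislice e r M j. g x)\<^sup>2 / card (multislice e r M j))
         \<le> swap_energy e r M j g / (real M - 1)"
proof -
  define V where "V = multislice e r M j"
  define n where "n = real (card V)"
  define Var where "Var = L2_inner e r M j g g - (L2_inner e r M j g (\<lambda>_. 1))\<^sup>2"
  have empty: "n = 0 \<Longrightarrow> V = {}"
    unfolding n_def V_def by (simp add: finite_multislice)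
  have Var_eq: "(\<Sum>x\<in>V. (g x)\<^sup>2) - (\<Sum>x\<in>V. g x)\<^sup>2 / n = n * Var"
    unfolding Var_def L2_inner_eq_sum V_def[symmetric] n_def[symmetric]
    using empty by (cases "n = 0") (simp_all add: field_simps power2_eq_square)
  have energy: "swap_energy e r M j g / (real M - 1) = n * dirichlet e r M j g"
    unfolding dirichlet_eq_swap_energy V_def[symmetric] n_def[symmetric]
    using empty by (cases "n = 0") (simp_all add: swap_energy_def V_def)
  have "lam * Var \<le> dirichlet e r M j g"
  proof (cases "Var > 0")
    case True
    then have "lam \<le> dirichlet e r M j g / Var"
      using assms(3) gap_le_dirichlet_div_variance[of e r M j g] unfolding Var_def
      by (metis ereal_less_eq(3) order_trans)
    with True show ?thesis by (simp add: field_simps)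
  next
    case False
    then show ?thesis using dirichlet_nonneg[OF assms(1)] assms(2)
      by (meson mult_nonneg_nonpos not_less order_trans)
  qed
  then have "n * (lam * Var) \<le> n * dirichlet e r M j g"
    unfolding n_def by (intro mult_left_mono) auto
  then show ?thesis
    unfolding V_def[symmetric] n_def[symmetric] Var_eq energy by (simp add: ac_simps)
qed

lemma sum_card_filter_swap:
  assumes "finite B" "finite L"
  shows "(\<Sum>l\<in>L. card {x\<in>B. P x l}) = (\<Sum>x\<in>B. card {l\<in>L. P x l})"
proof -
  have "(\<Sum>l\<in>L. card {x\<in>B. P x l}) = (\<Sum>l\<in>L. \<Sum>x\<in>B. if P x l then 1 else 0)"
    using assms by (simp add: sum.If_cases Int_def conj_commute)
  also have "\<dots> = (\<Sum>x\<in>B. \<Sum>l\<in>L. if P x l then 1 else 0)" by (rule sum.swap)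
  also have "\<dots> = (\<Sum>x\<in>B. card {l\<in>L. P x l})"
    using assms by (simp add: sum.If_cases Int_def conj_commute)
  finally show ?thesis .
qed

lemma card_coord_eq_if_swap_closed:
  assumes "a \<in> L" "b \<in> L"
    and closed: "\<And>x p q. x \<in> B \<Longrightarrow> p \<in> L \<Longrightarrow> q \<in> L \<Longrightarrow> swap_coords p q x \<in> B"
  shows "card {x\<in>B. x a = v} = card {x\<in>B. x b = v}"
  by (rule bij_betw_same_card[where f="swap_coords a b"],
      rule bij_betw_byWitness[where f'="swap_coords a b"])
     (use assms in \<open>auto simp: swap_coords_def\<close>)

lemma sum_coord_pairs_transpose:
  assumes l: "l \<in> {1..N}" and G: "\<And>a b. G a b = G b a"
  shows "(\<Sum>(i, j)\<in>coord_pairs (N - 1).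
            G (Transposition.transpose l N i) (Transposition.transpose l N j)) =
         (\<Sum>p\<in>{p\<in>coord_pairs N. fst p \<noteq> l \<and> snd p \<noteq> l}. G (fst p) (snd p))"
proof -
  define t where "t = Transposition.transpose l N"
  define \<phi> where "\<phi> = (\<lambda>(i, j). (min (t i) (t j), max (t i) (t j)))"
  show ?thesis
    unfolding t_def[symmetric]
  proof (rule sum.reindex_bij_witness[where i=\<phi> and j=\<phi>])
    fix a assume "a \<in> coord_pairs (N - 1)"
    then show "\<phi> (\<phi> a) = a" "\<phi> a \<in> {p\<in>coord_pairs N. fst p \<noteq> l \<and> snd p \<noteq> l}"
      using l by (auto simp: \<phi>_def t_def Transposition.transpose_def min_def max_def
          split: if_splits)
    show "G (fst (\<phi> a)) (snd (\<phi> a)) = (case a of (i, j) \<Rightarrow> G (t i) (t j))"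
      using G by (cases a) (auto simp: \<phi>_def min_def max_def)
  next
    fix b assume "b \<in> {p\<in>coord_pairs N. fst p \<noteq> l \<and> snd p \<noteq> l}"
    then show "\<phi> (\<phi> b) = b" "\<phi> b \<in> coord_pairs (N - 1)"
      using l by (auto simp: \<phi>_def t_def Transposition.transpose_def min_def max_def
          split: if_splits)
  qed
qed

lemma sum_sum_coord_pairs_avoiding:
  assumes N: "N \<ge> 2"
  shows "(\<Sum>l\<in>{1..N}. \<Sum>p\<in>{p\<in>coord_pairs N. fst p \<noteq> l \<and> snd p \<noteq> l}. (F p :: real)) =
         (real N - 2) * (\<Sum>p\<in>coord_pairs N. F p)"
proof -
  have "(\<Sum>l\<in>{1..N}. \<Sum>p\<in>{p\<in>coord_pairs N. fst p \<noteq> l \<and> snd p \<noteq> l}. F p) =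
        (\<Sum>p\<in>coord_pairs N. \<Sum>l\<in>{1..N}. if fst p \<noteq> l \<and> snd p \<noteq> l then F p else 0)"
    by (subst sum.swap[symmetric]) (intro sum.cong refl sum.inter_filter finite_coord_pairs)
  also have "\<dots> = (\<Sum>p\<in>coord_pairs N. (real N - 2) * F p)"
  proof (intro sum.cong refl)
    fix p assume p: "p \<in> coord_pairs N"
    have "{l\<in>{1..N}. fst p \<noteq> l \<and> snd p \<noteq> l} = {1..N} - {fst p, snd p}" by auto
    moreover have "card ({1..N} - {fst p, snd p}) = N - 2"
      using p by (subst card_Diff_subset) auto
    ultimately show "(\<Sum>l\<in>{1..N}. if fst p \<noteq> l \<and> snd p \<noteq> l then F p else 0) = (real N - 2) * F p"
      using N by (simp add: sum.inter_filter[symmetric] of_nat_diff)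
  qed
  finally show ?thesis by (simp add: sum_distrib_left)
qed

locale multislice_step =
  fixes e :: "nat \<Rightarrow> real" and r N :: nat and k :: "nat \<Rightarrow> nat"
  assumes inj_e: "inj_on e {..<r}" and N_ge_3: "N \<ge> 3"
    and k_pos: "\<forall>m<r. k m \<ge> 1" and sum_k: "(\<Sum>m<r. k m) = N"
begin

abbreviation V :: "(nat \<Rightarrow> real) set" where "V \<equiv> multislice e r N k"

abbreviation n :: nat where "n \<equiv> card V"

definition level_card :: "nat \<Rightarrow> nat" where
  "level_card m = card {x\<in>V. x N = e m}"

lemma finite_V: "finite V"
  by (rule finite_multislice)

lemma e_eq_iff: "m < r \<Longrightarrow> m' < r \<Longrightarrow> e m = e m' \<longleftrightarrow> m = m'"
  using inj_e by (auto dest: inj_onD)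

lemma V_coord_in_range: "x \<in> V \<Longrightarrow> l \<in> {1..N} \<Longrightarrow> \<exists>m<r. x l = e m"
  unfolding multislice_def by (auto simp: PiE_iff)

lemma card_level_V: "x \<in> V \<Longrightarrow> m < r \<Longrightarrow> card {l\<in>{1..N}. x l = e m} = k m"
  unfolding multislice_def by auto

lemma swap_coords_in_V: "x \<in> V \<Longrightarrow> p \<in> {1..N} \<Longrightarrow> q \<in> {1..N} \<Longrightarrow> swap_coords p q x \<in> V"
  by (rule swap_coords_in_multislice)

lemma level_card_any_coord: "l \<in> {1..N} \<Longrightarrow> card {x\<in>V. x l = e m} = level_card m"
  unfolding level_card_def using N_ge_3
  by (intro card_coord_eq_if_swap_closed[where L="{1..N}"]) (auto intro: swap_coords_in_V)

lemma N_mult_level_card: "m < r \<Longrightarrow> N * level_card m = n * k m"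
proof -
  assume m: "m < r"
  have "(\<Sum>l\<in>{1..N}. card {x\<in>V. x l = e m}) = (\<Sum>x\<in>V. card {l\<in>{1..N}. x l = e m})"
    by (rule sum_card_filter_swap) (auto simp: finite_V)
  also have "\<dots> = (\<Sum>x\<in>V. k m)" using m by (intro sum.cong refl card_level_V) auto
  finally show ?thesis using level_card_any_coord by simp
qed

lemma level_card_pos: "n > 0 \<Longrightarrow> m < r \<Longrightarrow> level_card m > 0"
  using N_mult_level_card[of m] k_pos N_ge_3 by (metis gr0I mult_is_0 not_one_le_zero)

text \<open>Two distinct coordinates of a uniform point of the slice are negatively correlated:
  given \<open>x l = e m\<close>, the other \<open>N - 1\<close> coordinates carry the counts \<open>k\<^bsup>(m)\<^esup>\<close>.\<close>

lemma card_two_levels: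
  assumes l: "l \<in> {1..N}" "l' \<in> {1..N}" "l' \<noteq> l" and m: "m < r" "m' < r"
  shows "real (N - 1) * card {x\<in>V. x l = e m \<and> x l' = e m'}
       = real (level_card m) * (real (k m') - (if m = m' then 1 else 0))"
proof -
  define B where "B = {x\<in>V. x l = e m}"
  define L where "L = {1..N} - {l}"
  define d where "d = (if m = m' then 1 else 0 :: nat)"
  have finB: "finite B" unfolding B_def using finite_V by simp
  have "card L = N - 1" unfolding L_def using l by simp
  have closed: "swap_coords p q x \<in> B" if "x \<in> B" "p \<in> L" "q \<in> L" for x p q
    using that unfolding B_def L_def by (auto intro: swap_coords_in_V)
  have const: "card {x\<in>B. x q = e m'} = card {x\<in>B. x l' = e m'}" if "q \<in> L" for q
    by (rule card_coord_eq_if_swap_closed[where L=L, OF _ _ closed]) (use that l in \<open>auto simp: L_def\<close>)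
  have "(\<Sum>q\<in>L. card {x\<in>B. x q = e m'}) = (\<Sum>x\<in>B. card {q\<in>L. x q = e m'})"
    by (rule sum_card_filter_swap) (auto simp: finB L_def)
  also have "\<dots> = (\<Sum>x\<in>B. k m' - d)"
  proof (intro sum.cong refl)
    fix x assume x: "x \<in> B"
    have "{q\<in>L. x q = e m'} = {q\<in>{1..N}. x q = e m'} - {l}" unfolding L_def by auto
    moreover have "l \<in> {q\<in>{1..N}. x q = e m'} \<longleftrightarrow> m = m'"
      using x l m e_eq_iff unfolding B_def by auto
    ultimately show "card {q\<in>L. x q = e m'} = k m' - d"
      using x card_level_V[of x m'] m unfolding B_def d_def by (simp add: card_Diff_singleton_if)
  qed
  finally have "(N - 1) * card {x\<in>B. x l' = e m'} = card B * (k m' - d)"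
    using const \<open>card L = N - 1\<close> by simp
  moreover have "card B = level_card m" unfolding B_def using level_card_any_coord l by simp
  moreover have "{x\<in>B. x l' = e m'} = {x\<in>V. x l = e m \<and> x l' = e m'}" unfolding B_def by auto
  moreover have "d \<le> k m'" using k_pos m unfolding d_def by auto
  ultimately have "real ((N - 1) * card {x\<in>V. x l = e m \<and> x l' = e m'}) =
      real (level_card m * (k m' - d))"
    by simp
  then show ?thesis
    using \<open>d \<le> k m'\<close> unfolding d_def by (simp only: of_nat_mult of_nat_diff) simp
qed

lemma sum_V_split_coord:
  assumes "l \<in> {1..N}"
  shows "(\<Sum>x\<in>V. F x) = (\<Sum>m<r. \<Sum>x\<in>{x\<in>V. x l = e m}. F x)"
proof -
  have "V = (\<Union>m\<in>{..<r}. {x\<in>V. x l = e m})" using V_coord_in_range[OF _ assms] by auto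
  then have "(\<Sum>x\<in>V. F x) = (\<Sum>x\<in>(\<Union>m\<in>{..<r}. {x\<in>V. x l = e m}). F x)" by simp
  also have "\<dots> = (\<Sum>m<r. \<Sum>x\<in>{x\<in>V. x l = e m}. F x)"
    by (rule sum.UNION_disjoint) (auto simp: finite_V e_eq_iff)
  finally show ?thesis .
qed

end

section \<open>Fibres of the last coordinate\<close>

context multislice_step
begin

abbreviation fibre_slice :: "nat \<Rightarrow> (nat \<Rightarrow> real) set" where
  "fibre_slice m \<equiv> multislice e r (N - 1) (k(m := k m - 1))"

lemma fun_upd_last_in_V:
  assumes m: "m < r" and y: "y \<in> fibre_slice m"
  shows "y(N := e m) \<in> V"
proof -
  have y1: "y \<in> PiE {1..N-1} (\<lambda>_. e ` {..<r})"
    and y2: "\<forall>m'<r. card {i\<in>{1..N-1}. y i = e m'} = (k(m := k m - 1)) m'"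
    using y unfolding multislice_def by auto
  have "y(N := e m) \<in> PiE {1..N} (\<lambda>_. e ` {..<r})"
    using y1 m N_ge_3 unfolding PiE_iff extensional_def by auto
  moreover have "card {i\<in>{1..N}. (y(N := e m)) i = e m'} = k m'" if m': "m' < r" for m'
  proof -
    have "{i\<in>{1..N}. (y(N := e m)) i = e m'} =
        {i\<in>{1..N-1}. y i = e m'} \<union> (if m' = m then {N} else {})"
      using N_ge_3 e_eq_iff[OF m m'] by auto
    moreover have "N \<notin> {i\<in>{1..N-1}. y i = e m'}" by auto
    ultimately show ?thesis using y2 m' k_pos m by auto
  qed
  ultimately show ?thesis unfolding multislice_def by auto
qed

lemma fun_upd_last_in_fibre_slice:
  assumes m: "m < r" and x: "x \<in> V" "x N = e m"
  shows "x(N := undefined) \<in> fibre_slice m"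
proof -
  have x1: "x \<in> PiE {1..N} (\<lambda>_. e ` {..<r})"
    and x2: "\<forall>m'<r. card {i\<in>{1..N}. x i = e m'} = k m'"
    using x unfolding multislice_def by auto
  have "x(N := undefined) \<in> PiE {1..N-1} (\<lambda>_. e ` {..<r})"
    using x1 N_ge_3 unfolding PiE_iff extensional_def by auto
  moreover have "card {i\<in>{1..N-1}. (x(N := undefined)) i = e m'} = (k(m := k m - 1)) m'"
    if m': "m' < r" for m'
  proof -
    have "{i\<in>{1..N-1}. (x(N := undefined)) i = e m'} = {i\<in>{1..N}. x i = e m'} - {N}"
      using N_ge_3 by auto
    moreover have "N \<in> {i\<in>{1..N}. x i = e m'} \<longleftrightarrow> m' = m"
      using x N_ge_3 e_eq_iff[OF m m'] by auto
    ultimately show ?thesis using x2 m' by (auto simp: card_Diff_singleton_if)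
  qed
  ultimately show ?thesis unfolding multislice_def by auto
qed

lemma bij_betw_fibre_slice_level:
  assumes m: "m < r"
  shows "bij_betw (\<lambda>y. y(N := e m)) (fibre_slice m) {x\<in>V. x N = e m}"
proof (rule bij_betw_byWitness[where f'="\<lambda>x. x(N := undefined)"])
  show "\<forall>y\<in>fibre_slice m. (y(N := e m))(N := undefined) = y"
  proof
    fix y assume "y \<in> fibre_slice m"
    then have "y N = undefined"
      unfolding multislice_def using N_ge_3 by (auto simp: PiE_iff extensional_def)
    then show "(y(N := e m))(N := undefined) = y" by auto
  qed
qed (use fun_upd_last_in_V fun_upd_last_in_fibre_slice m in auto)

lemma card_fibre_slice: "m < r \<Longrightarrow> card (fibre_slice m) = level_card m"
  unfolding level_card_def by (rule bij_betw_same_card[OF bij_betw_fibre_slice_level])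

lemma gap_bound_on_level:
  assumes m: "m < r" and lam: "lam \<ge> 0" "ereal lam \<le> gap e r (N - 1) (k(m := k m - 1))"
  shows "lam * ((\<Sum>x\<in>{x\<in>V. x N = e m}. (g x)\<^sup>2)
                - (\<Sum>x\<in>{x\<in>V. x N = e m}. g x)\<^sup>2 / level_card m)
     \<le> (\<Sum>x\<in>{x\<in>V. x N = e m}. \<Sum>(i, j)\<in>coord_pairs (N - 1). (g (swap_coords i j x) - g x)\<^sup>2)
        / (real N - 2)"
proof -
  define A where "A = {x\<in>V. x N = e m}"
  have reindex: "(\<Sum>y\<in>fibre_slice m. F (y(N := e m))) = (\<Sum>x\<in>A. F x)" for F :: "_ \<Rightarrow> real"
    unfolding A_def using sum.reindex_bij_betw[OF bij_betw_fibre_slice_level[OF m]] .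
  have "swap_energy e r (N - 1) (k(m := k m - 1)) (\<lambda>y. g (y(N := e m)))
      = (\<Sum>y\<in>fibre_slice m. \<Sum>(i, j)\<in>coord_pairs (N - 1).
           (g (swap_coords i j (y(N := e m))) - g (y(N := e m)))\<^sup>2)"
    unfolding swap_energy_def by (intro sum.cong refl) (auto simp: swap_coords_fun_upd)
  also have "\<dots> = (\<Sum>x\<in>A. \<Sum>(i, j)\<in>coord_pairs (N - 1). (g (swap_coords i j x) - g x)\<^sup>2)"
    by (rule reindex)
  finally have energy: "swap_energy e r (N - 1) (k(m := k m - 1)) (\<lambda>y. g (y(N := e m)))
      = (\<Sum>x\<in>A. \<Sum>(i, j)\<in>coord_pairs (N - 1). (g (swap_coords i j x) - g x)\<^sup>2)" .
  have "real (N - 1) - 1 = real N - 2" using N_ge_3 by (simp add: of_nat_diff)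
  then show ?thesis
    using gap_mult_variance_le_swap_energy[of "N - 1" lam, OF _ lam, of "\<lambda>y. g (y(N := e m))"]
      N_ge_3 reindex[of "\<lambda>x. (g x)\<^sup>2"] reindex[of g]
    unfolding energy card_fibre_slice[OF m] A_def[symmetric] by simp
qed

lemma gap_bound_last_coord:
  assumes lam: "lam \<ge> 0" "\<forall>m<r. ereal lam \<le> gap e r (N - 1) (k(m := k m - 1))"
  shows "lam * ((\<Sum>x\<in>V. (g x)\<^sup>2) - (\<Sum>m<r. (\<Sum>x\<in>{x\<in>V. x N = e m}. g x)\<^sup>2 / level_card m))
     \<le> (\<Sum>x\<in>V. \<Sum>(i, j)\<in>coord_pairs (N - 1). (g (swap_coords i j x) - g x)\<^sup>2) / (real N - 2)"
proof -
  have N: "N \<in> {1..N}" using N_ge_3 by auto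
  have "lam * ((\<Sum>x\<in>V. (g x)\<^sup>2) - (\<Sum>m<r. (\<Sum>x\<in>{x\<in>V. x N = e m}. g x)\<^sup>2 / level_card m))
     = (\<Sum>m<r. lam * ((\<Sum>x\<in>{x\<in>V. x N = e m}. (g x)\<^sup>2)
                        - (\<Sum>x\<in>{x\<in>V. x N = e m}. g x)\<^sup>2 / level_card m))"
    by (simp add: sum_V_split_coord[OF N, of "\<lambda>x. (g x)\<^sup>2"] sum_subtractf sum_distrib_left
        right_diff_distrib)
  also have "\<dots> \<le> (\<Sum>m<r. (\<Sum>x\<in>{x\<in>V. x N = e m}.
                \<Sum>(i, j)\<in>coord_pairs (N - 1). (g (swap_coords i j x) - g x)\<^sup>2) / (real N - 2))"
    using lam by (intro sum_mono gap_bound_on_level) auto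
  also have "\<dots> = (\<Sum>x\<in>V. \<Sum>(i, j)\<in>coord_pairs (N - 1). (g (swap_coords i j x) - g x)\<^sup>2)
                  / (real N - 2)"
    by (simp add: sum_V_split_coord[OF N] sum_divide_distrib)
  finally show ?thesis .
qed

end

section \<open>Averaging over the coordinate that is fixed\<close>

context multislice_step
begin

definition pair_energy :: "((nat \<Rightarrow> real) \<Rightarrow> real) \<Rightarrow> nat \<Rightarrow> nat \<Rightarrow> real" where
  "pair_energy f a b = (\<Sum>y\<in>V. (f (swap_coords a b y) - f y)\<^sup>2)"

lemma pair_energy_commute: "pair_energy f a b = pair_energy f b a"
  unfolding pair_energy_def by (simp add: swap_coords_commute)

lemma swap_energy_eq_sum_pair_energy:
  "swap_energy e r N k f = (\<Sum>p\<in>coord_pairs N. pair_energy f (fst p) (snd p))"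
  unfolding swap_energy_def pair_energy_def by (subst sum.swap) (simp add: case_prod_unfold)

lemma last_coord_energy_swap_coords:
  assumes l: "l \<in> {1..N}"
  shows "(\<Sum>x\<in>V. \<Sum>(i, j)\<in>coord_pairs (N - 1).
            (f (swap_coords l N (swap_coords i j x)) - f (swap_coords l N x))\<^sup>2)
    = (\<Sum>p\<in>{p\<in>coord_pairs N. fst p \<noteq> l \<and> snd p \<noteq> l}. pair_energy f (fst p) (snd p))"
proof -
  have N: "N \<in> {1..N}" using N_ge_3 by auto
  have "(\<Sum>x\<in>V. (f (swap_coords l N (swap_coords i j x)) - f (swap_coords l N x))\<^sup>2)
      = pair_energy f (Transposition.transpose l N i) (Transposition.transpose l N j)" for i j
  proof -
    have "(\<Sum>x\<in>V. (f (swap_coords l N (swap_coords i j x)) - f (swap_coords l N x))\<^sup>2)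
        = (\<Sum>x\<in>V. (\<lambda>y. (f (swap_coords l N (swap_coords i j (swap_coords l N y))) - f y)\<^sup>2)
                    (swap_coords l N x))"
      by simp
    also have "\<dots> = (\<Sum>y\<in>V. (f (swap_coords l N (swap_coords i j (swap_coords l N y))) - f y)\<^sup>2)"
      by (rule sum_multislice_swap_coords[OF l N])
    finally show ?thesis unfolding pair_energy_def swap_coords_conj .
  qed
  then have "(\<Sum>x\<in>V. \<Sum>(i, j)\<in>coord_pairs (N - 1).
            (f (swap_coords l N (swap_coords i j x)) - f (swap_coords l N x))\<^sup>2)
     = (\<Sum>(i, j)\<in>coord_pairs (N - 1).
          pair_energy f (Transposition.transpose l N i) (Transposition.transpose l N j))"
    by (subst sum.swap) (simp add: case_prod_unfold)
  also have "\<dots> = (\<Sum>p\<in>{p\<in>coord_pairs N. fst p \<noteq> l \<and> snd p \<noteq> l}. pair_energy f (fst p) (snd p))"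
    by (rule sum_coord_pairs_transpose[OF l pair_energy_commute])
  finally show ?thesis .
qed

definition level_sum :: "((nat \<Rightarrow> real) \<Rightarrow> real) \<Rightarrow> nat \<Rightarrow> nat \<Rightarrow> real" where
  "level_sum f l m = (\<Sum>x\<in>{x\<in>V. x l = e m}. f x)"

text \<open>\<open>coord_energy f / n\<close> is \<open>\<Sum>\<^sub>l \<parallel>E[f | x\<^sub>l]\<parallel>\<^sup>2\<close> for the uniform measure on the slice.\<close>

definition coord_energy :: "((nat \<Rightarrow> real) \<Rightarrow> real) \<Rightarrow> real" where
  "coord_energy f = (\<Sum>l\<in>{1..N}. \<Sum>m<r. (level_sum f l m)\<^sup>2 / level_card m)"

lemma level_sum_swap_coords_last:
  assumes l: "l \<in> {1..N}"
  shows "(\<Sum>x\<in>{x\<in>V. x N = e m}. f (swap_coords l N x)) = level_sum f l m"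
proof -
  have "bij_betw (swap_coords l N) {x\<in>V. x N = e m} {x\<in>V. x l = e m}"
    by (rule bij_betw_byWitness[where f'="swap_coords l N"])
       (use l N_ge_3 in \<open>auto intro: swap_coords_in_V\<close>)
  then show ?thesis unfolding level_sum_def by (rule sum.reindex_bij_betw)
qed

text \<open>Applying the fibre bound to \<open>f \<circ> \<pi>\<^bsub>l,N\<^esub>\<close> for every coordinate \<open>l\<close> counts each pair of
  coordinates \<open>N - 2\<close> times.\<close>

lemma gap_bound_all_coords:
  assumes lam: "lam \<ge> 0" "\<forall>m<r. ereal lam \<le> gap e r (N - 1) (k(m := k m - 1))"
  shows "lam * (real N * (\<Sum>x\<in>V. (f x)\<^sup>2) - coord_energy f) \<le> swap_energy e r N k f"
proof -
  have N: "N \<in> {1..N}" using N_ge_3 by auto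
  define g where "g l = (\<lambda>x. f (swap_coords l N x))" for l
  have sq: "(\<Sum>x\<in>V. (g l x)\<^sup>2) = (\<Sum>x\<in>V. (f x)\<^sup>2)" if "l \<in> {1..N}" for l
    unfolding g_def using sum_multislice_swap_coords[OF that N, of "\<lambda>x. (f x)\<^sup>2"] .
  have "lam * (real N * (\<Sum>x\<in>V. (f x)\<^sup>2) - coord_energy f)
      = (\<Sum>l\<in>{1..N}. lam * ((\<Sum>x\<in>V. (g l x)\<^sup>2)
          - (\<Sum>m<r. (\<Sum>x\<in>{x\<in>V. x N = e m}. g l x)\<^sup>2 / level_card m)))"
    unfolding coord_energy_def g_def
    by (simp add: sq[unfolded g_def] level_sum_swap_coords_last sum_subtractf sum_distrib_left
        right_diff_distrib mult.left_commute)
  also have "\<dots> \<le> (\<Sum>l\<in>{1..N}. (\<Sum>x\<in>V. \<Sum>(i, j)\<in>coord_pairs (N - 1).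
                      (g l (swap_coords i j x) - g l x)\<^sup>2) / (real N - 2))"
    by (intro sum_mono gap_bound_last_coord[OF lam])
  also have "\<dots> = (\<Sum>l\<in>{1..N}. (\<Sum>p\<in>{p\<in>coord_pairs N. fst p \<noteq> l \<and> snd p \<noteq> l}.
                      pair_energy f (fst p) (snd p)) / (real N - 2))"
    unfolding g_def
    by (intro sum.cong refl arg_cong[where f="\<lambda>x. x / (real N - 2)"]
        last_coord_energy_swap_coords) auto
  also have "\<dots> = swap_energy e r N k f"
    using N_ge_3 sum_sum_coord_pairs_avoiding[of N "\<lambda>p. pair_energy f (fst p) (snd p)"]
    unfolding swap_energy_eq_sum_pair_energy by (simp add: sum_divide_distrib[symmetric])
  finally show ?thesis .
qed

end

section \<open>Conditional means of single coordinates\<close>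

context multislice_step
begin

definition cond_mean :: "((nat \<Rightarrow> real) \<Rightarrow> real) \<Rightarrow> nat \<Rightarrow> nat \<Rightarrow> real" where
  "cond_mean f l m = level_sum f l m / level_card m"

definition coord_proj_sum :: "((nat \<Rightarrow> real) \<Rightarrow> real) \<Rightarrow> (nat \<Rightarrow> real) \<Rightarrow> real" where
  "coord_proj_sum f x = (\<Sum>l\<in>{1..N}. \<Sum>m<r. cond_mean f l m * (if x l = e m then 1 else 0))"

definition total_cond_mean :: "((nat \<Rightarrow> real) \<Rightarrow> real) \<Rightarrow> nat \<Rightarrow> real" where
  "total_cond_mean f m = (\<Sum>l\<in>{1..N}. cond_mean f l m)"

lemma sum_cond_mean_mult_k:
  assumes n: "n > 0" and mean: "(\<Sum>x\<in>V. f x) = 0" and l: "l \<in> {1..N}"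
  shows "(\<Sum>m<r. cond_mean f l m * k m) = 0"
proof -
  have "cond_mean f l m * k m = level_sum f l m * (real N / n)" if "m < r" for m
  proof -
    have "real N * level_card m = n * k m" using N_mult_level_card[OF that] by (metis of_nat_mult)
    then show ?thesis unfolding cond_mean_def using level_card_pos[OF n that] n
      by (simp add: field_simps)
  qed
  then have "(\<Sum>m<r. cond_mean f l m * k m) = (\<Sum>m<r. level_sum f l m) * (real N / n)"
    by (simp add: sum_distrib_right sum_divide_distrib)
  also have "(\<Sum>m<r. level_sum f l m) = 0"
    unfolding level_sum_def using sum_V_split_coord[OF l, of f] mean by simp
  finally show ?thesis by simp
qed

lemma sum_level_mult_coord_proj_sum:
  "(\<Sum>x\<in>V. F x * coord_proj_sum f x) =
     (\<Sum>l\<in>{1..N}. \<Sum>m<r. cond_mean f l m * (\<Sum>x\<in>{x\<in>V. x l = e m}. F x))"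
proof -
  have "(\<Sum>x\<in>V. F x * coord_proj_sum f x) =
      (\<Sum>l\<in>{1..N}. \<Sum>m<r. cond_mean f l m * (\<Sum>x\<in>V. F x * (if x l = e m then 1 else 0)))"
    unfolding coord_proj_sum_def
    by (simp add: sum_distrib_left sum_distrib_right mult.assoc mult.left_commute sum.swap[of _ _ V])
  then show ?thesis by (simp add: finite_V sum.inter_filter if_distrib cong: if_cong)
qed

lemma sum_mult_coord_proj_sum: "(\<Sum>x\<in>V. f x * coord_proj_sum f x) = coord_energy f"
  unfolding sum_level_mult_coord_proj_sum coord_energy_def cond_mean_def level_sum_def[symmetric]
  by (simp add: power2_eq_square)

lemma sum_cond_mean_mult_card_same_coord:
  assumes l: "l \<in> {1..N}" and m: "m < r"
  shows "(\<Sum>m'<r. cond_mean f l m' * card {x\<in>V. x l = e m \<and> x l = e m'}) =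
    cond_mean f l m * level_card m"
proof -
  have "card {x\<in>V. x l = e m \<and> x l = e m'} = (if m' = m then level_card m else 0)"
    if "m' < r" for m'
  proof -
    have "{x\<in>V. x l = e m \<and> x l = e m'} = (if m' = m then {x\<in>V. x l = e m} else {})"
      using e_eq_iff[OF m that] by auto
    then show ?thesis using level_card_any_coord[OF l, of m] by simp
  qed
  then have "(\<Sum>m'<r. cond_mean f l m' * card {x\<in>V. x l = e m \<and> x l = e m'}) =
      (\<Sum>m'<r. if m' = m then cond_mean f l m * level_card m else 0)"
    by (intro sum.cong refl) auto
  then show ?thesis using m by simp
qed

lemma sum_cond_mean_mult_card_other_coord:
  assumes n: "n > 0" and mean: "(\<Sum>x\<in>V. f x) = 0"
    and l: "l \<in> {1..N}" "l' \<in> {1..N}" "l' \<noteq> l" and m: "m < r"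
  shows "(\<Sum>m'<r. cond_mean f l' m' * card {x\<in>V. x l = e m \<and> x l' = e m'}) =
    - level_card m / (real N - 1) * cond_mean f l' m"
proof -
  have N1: "real (N - 1) = real N - 1" "real N - 1 > 0" using N_ge_3 by (auto simp: of_nat_diff)
  have "card {x\<in>V. x l = e m \<and> x l' = e m'} =
      level_card m / (real N - 1) * (real (k m') - (if m = m' then 1 else 0))" if "m' < r" for m'
    using card_two_levels[OF l m that] N1 by (simp add: field_simps)
  then have "(\<Sum>m'<r. cond_mean f l' m' * card {x\<in>V. x l = e m \<and> x l' = e m'}) =
      (\<Sum>m'<r. level_card m / (real N - 1) *
          (cond_mean f l' m' * k m' - (if m' = m then cond_mean f l' m else 0)))"
    by (intro sum.cong refl) (auto simp: field_simps)
  also have "\<dots> = level_card m / (real N - 1) *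
      ((\<Sum>m'<r. cond_mean f l' m' * k m') - cond_mean f l' m)"
  proof -
    have "(\<Sum>m'<r. if m' = m then cond_mean f l' m else 0) = cond_mean f l' m" using m by simp
    then show ?thesis unfolding sum_distrib_left[symmetric] sum_subtractf by simp
  qed
  finally show ?thesis using sum_cond_mean_mult_k[OF n mean l(2)] by simp
qed

lemma level_sum_coord_proj_sum:
  assumes n: "n > 0" and mean: "(\<Sum>x\<in>V. f x) = 0" and l: "l \<in> {1..N}" and m: "m < r"
  shows "level_sum (coord_proj_sum f) l m
     = real N / (real N - 1) * level_card m * cond_mean f l m
       - level_card m / (real N - 1) * total_cond_mean f m"
proof -
  have N1: "real N - 1 > 0" using N_ge_3 by simp
  define B where "B = {x\<in>V. x l = e m}"
  have card_B: "(\<Sum>x\<in>B. (if x l' = e m' then 1 else 0)) =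
      real (card {x\<in>V. x l = e m \<and> x l' = e m'})" for l' m'
  proof -
    have "{x\<in>B. x l' = e m'} = {x\<in>V. x l = e m \<and> x l' = e m'}" unfolding B_def by auto
    then show ?thesis using finite_V unfolding B_def by (simp add: sum.If_cases Int_def)
  qed
  have "level_sum (coord_proj_sum f) l m =
      (\<Sum>l'\<in>{1..N}. \<Sum>m'<r. cond_mean f l' m' * card {x\<in>V. x l = e m \<and> x l' = e m'})"
    unfolding level_sum_def coord_proj_sum_def B_def[symmetric]
    by (simp add: sum.swap[of _ _ B] sum_distrib_left[symmetric] card_B)
  also have "\<dots> = cond_mean f l m * level_card m
      + (\<Sum>l'\<in>{1..N} - {l}. - level_card m / (real N - 1) * cond_mean f l' m)"
    using l by (simp add: sum.remove sum_cond_mean_mult_card_same_coord[OF l m]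
        sum_cond_mean_mult_card_other_coord[OF n mean l _ _ m])
  also have "\<dots> = cond_mean f l m * level_card m
      - level_card m / (real N - 1) * (total_cond_mean f m - cond_mean f l m)"
    unfolding sum_distrib_left[symmetric] total_cond_mean_def using l by (simp add: sum.remove)
  also have "\<dots> = real N / (real N - 1) * level_card m * cond_mean f l m
       - level_card m / (real N - 1) * total_cond_mean f m"
  proof -
    have "a * c - c / d * (T - a) = (d + 1) / d * c * a - c / d * T" if "d \<noteq> 0"
      for a c d T :: real
      using that by (simp add: field_simps)
    from this[of "real N - 1"] show ?thesis using N1 by simp
  qed
  finally show ?thesis .
qed

lemma sum_square_coord_proj_sum_le:
  assumes n: "n > 0" and mean: "(\<Sum>x\<in>V. f x) = 0"
  shows "(\<Sum>x\<in>V. (coord_proj_sum f x)\<^sup>2) \<le> real N / (real N - 1) * coord_energy f"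
proof -
  have N1: "real N - 1 > 0" using N_ge_3 by simp
  have "(\<Sum>x\<in>V. (coord_proj_sum f x)\<^sup>2) =
      (\<Sum>l\<in>{1..N}. \<Sum>m<r. cond_mean f l m * level_sum (coord_proj_sum f) l m)"
    unfolding power2_eq_square sum_level_mult_coord_proj_sum level_sum_def ..
  also have "\<dots> = (\<Sum>l\<in>{1..N}. \<Sum>m<r.
        real N / (real N - 1) * (level_card m * (cond_mean f l m)\<^sup>2)
        - 1 / (real N - 1) * (level_card m * total_cond_mean f m * cond_mean f l m))"
    by (intro sum.cong refl)
       (simp add: level_sum_coord_proj_sum[OF n mean] field_simps power2_eq_square)
  also have "\<dots> = real N / (real N - 1) * (\<Sum>l\<in>{1..N}. \<Sum>m<r. level_card m * (cond_mean f l m)\<^sup>2)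
        - 1 / (real N - 1) * (\<Sum>m<r. level_card m * (total_cond_mean f m)\<^sup>2)"
  proof -
    have "(\<Sum>l\<in>{1..N}. \<Sum>m<r. level_card m * total_cond_mean f m * cond_mean f l m) =
        (\<Sum>m<r. level_card m * total_cond_mean f m * (\<Sum>l\<in>{1..N}. cond_mean f l m))"
      by (subst sum.swap) (simp add: sum_distrib_left)
    also have "\<dots> = (\<Sum>m<r. level_card m * (total_cond_mean f m)\<^sup>2)"
      by (simp add: total_cond_mean_def power2_eq_square mult.assoc)
    finally have sw: "(\<Sum>l\<in>{1..N}. \<Sum>m<r. level_card m * total_cond_mean f m * cond_mean f l m) =
        (\<Sum>m<r. level_card m * (total_cond_mean f m)\<^sup>2)" .
    have expand: "(\<Sum>l\<in>{1..N}. \<Sum>m<r.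
          real N / (real N - 1) * (level_card m * (cond_mean f l m)\<^sup>2)
          - 1 / (real N - 1) * (level_card m * total_cond_mean f m * cond_mean f l m))
       = real N / (real N - 1) * (\<Sum>l\<in>{1..N}. \<Sum>m<r. level_card m * (cond_mean f l m)\<^sup>2)
          - 1 / (real N - 1) *
            (\<Sum>l\<in>{1..N}. \<Sum>m<r. level_card m * total_cond_mean f m * cond_mean f l m)"
      by (simp only: sum_subtractf sum_distrib_left)
    show ?thesis using expand unfolding sw .
  qed
  also have "(\<Sum>l\<in>{1..N}. \<Sum>m<r. level_card m * (cond_mean f l m)\<^sup>2) = coord_energy f"
    unfolding coord_energy_def cond_mean_def using level_card_pos[OF n]
    by (intro sum.cong refl) (simp add: power_divide power2_eq_square)
  finally show ?thesis
    using N1 by (simp add: sum_nonneg)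
qed

text \<open>Cauchy--Schwarz, in the form \<open>0 \<le> \<parallel>f - t h\<parallel>\<^sup>2\<close> with \<open>t = (N - 1) / N\<close> and
  \<open>h = coord_proj_sum f\<close>, since \<open>\<langle>f, h\<rangle> = coord_energy f\<close>.\<close>

lemma coord_energy_le:
  assumes n: "n > 0" and mean: "(\<Sum>x\<in>V. f x) = 0"
  shows "coord_energy f \<le> real N / (real N - 1) * (\<Sum>x\<in>V. (f x)\<^sup>2)"
proof -
  have N1: "real N - 1 > 0" using N_ge_3 by simp
  define t where "t = (real N - 1) / real N"
  define h where "h = coord_proj_sum f"
  have t: "t > 0" "t * t * (real N / (real N - 1)) = t"
    using N1 N_ge_3 unfolding t_def by (auto simp: field_simps)
  have "0 \<le> (\<Sum>x\<in>V. (f x - t * h x)\<^sup>2)" by (intro sum_nonneg) auto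
  also have "\<dots> = (\<Sum>x\<in>V. (f x)\<^sup>2) - 2 * t * (\<Sum>x\<in>V. f x * h x) + t * t * (\<Sum>x\<in>V. (h x)\<^sup>2)"
    by (simp add: power2_diff sum.distrib sum_subtractf sum_distrib_left algebra_simps
        power_mult_distrib power2_eq_square)
  also have "\<dots> \<le> (\<Sum>x\<in>V. (f x)\<^sup>2) - 2 * t * coord_energy f
                  + t * t * (real N / (real N - 1) * coord_energy f)"
    unfolding h_def sum_mult_coord_proj_sum
    using sum_square_coord_proj_sum_le[OF n mean] t by (intro add_left_mono mult_left_mono) auto
  also have "\<dots> = (\<Sum>x\<in>V. (f x)\<^sup>2) - t * coord_energy f"
  proof -
    have "t * t * (real N / (real N - 1) * coord_energy f) = t * coord_energy f"
      using t(2) by (metis mult.assoc)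
    then show ?thesis by simp
  qed
  finally have "t * coord_energy f \<le> (\<Sum>x\<in>V. (f x)\<^sup>2)" by simp
  then show ?thesis using N1 N_ge_3 unfolding t_def by (simp add: field_simps)
qed

end

context multislice_step
begin

lemma dirichlet_ge_if_gap_lower_bound:
  assumes norm: "L2_norm_ms e r N k f = 1" and mean: "L2_inner e r N k f (\<lambda>_. 1) = 0"
    and lam: "lam \<ge> 0" "\<forall>m<r. ereal lam \<le> gap e r (N - 1) (k(m := k m - 1))"
  shows "lam * (real N * (real N - 2) / (real N - 1)\<^sup>2) \<le> dirichlet e r N k f"
proof -
  have N1: "real N - 1 > 0" using N_ge_3 by simp
  have ff: "L2_inner e r N k f f = 1" using norm unfolding L2_norm_ms_def by simp
  then have n: "n > 0" unfolding L2_inner_eq_sum by (cases "n = 0") auto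
  have sq: "(\<Sum>x\<in>V. (f x)\<^sup>2) = n"
    using ff n unfolding L2_inner_eq_sum by (simp add: power2_eq_square field_simps)
  have centred: "(\<Sum>x\<in>V. f x) = 0" using mean n unfolding L2_inner_eq_sum by simp
  have "lam * (real N * (real N - 2) / (real N - 1) * n)
      = lam * (real N * n - real N / (real N - 1) * n)"
    using N1 by (simp add: field_simps)
  also have "\<dots> \<le> lam * (real N * n - coord_energy f)"
    using coord_energy_le[OF n centred] sq lam(1) by (intro mult_left_mono) auto
  also have "\<dots> \<le> swap_energy e r N k f"
    using gap_bound_all_coords[OF lam, of f] sq by simp
  finally have energy: "lam * (real N * (real N - 2) / (real N - 1) * n) \<le> swap_energy e r N k f" .
  have "lam * (real N * (real N - 2) / (real N - 1)\<^sup>2)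
      = lam * (real N * (real N - 2) / (real N - 1) * n) / ((real N - 1) * n)"
    using N1 n by (simp add: power2_eq_square)
  also have "\<dots> \<le> swap_energy e r N k f / ((real N - 1) * n)"
    using energy N1 n by (intro divide_right_mono) auto
  finally show ?thesis unfolding dirichlet_eq_swap_energy .
qed

end

lemma ereal_mult_le_if_real_lower_bounds:
  fixes c d :: real and G :: ereal
  assumes c: "c > 0" and G: "G \<ge> 0"
    and bound: "\<And>lam. 0 \<le> lam \<Longrightarrow> ereal lam \<le> G \<Longrightarrow> lam * c \<le> d"
  shows "ereal c * G \<le> ereal d"
proof (cases G)
  case (real g)
  then have "g * c \<le> d" using G by (intro bound) auto
  then show ?thesis using real by (simp add: mult.commute)
next
  case PInf
  define lam where "lam = max 0 (d / c + 1)"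
  have "lam * c \<le> d" using PInf by (intro bound) (auto simp: lam_def)
  moreover have "(d / c + 1) * c \<le> lam * c" using c by (intro mult_right_mono) (auto simp: lam_def)
  moreover have "(d / c + 1) * c = d + c" using c by (simp add: field_simps)
  ultimately show ?thesis using c by simp
next
  case MInf
  then show ?thesis using G by simp
qed

theorem theorem3p1:
  fixes e :: "nat \<Rightarrow> real" and r N :: nat and k :: "nat \<Rightarrow> nat"
  assumes "r \<ge> 2"
    and "inj_on e {..<r}"
    and "N \<ge> 3"
    and "\<forall>m<r. k m \<ge> 1"
    and "(\<Sum>m<r. k m) = N"
  shows "gap e r N k \<ge>
    ereal (real N * (real N - 2) / (real N - 1)\<^sup>2) *
    Min ((\<lambda>m. gap e r (N - 1) (k(m := k m - 1))) ` {..<r})"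
proof -
  interpret multislice_step e r N k
    using assms by unfold_locales auto
  define G where "G = Min ((\<lambda>m. gap e r (N - 1) (k(m := k m - 1))) ` {..<r})"
  have G_le: "G \<le> gap e r (N - 1) (k(m := k m - 1))" if "m < r" for m
    unfolding G_def using that by (intro Min_le) auto
  have "G \<ge> 0"
    unfolding G_def using assms(1,3) by (subst Min_ge_iff) (auto intro!: gap_nonneg simp: lessThan_empty_iff)
  then have "ereal (real N * (real N - 2) / (real N - 1)\<^sup>2) * G \<le> ereal (dirichlet e r N k f)"
    if "L2_norm_ms e r N k f = 1" "L2_inner e r N k f (\<lambda>_. 1) = 0" for f
    using assms(3) G_le
    by (intro ereal_mult_le_if_real_lower_bounds dirichlet_ge_if_gap_lower_bound[OF that])
       (auto intro: order_trans)
  then show ?thesis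
    unfolding gap_def[of e r N k] G_def[symmetric] by (intro Inf_greatest) blast
qed

end
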